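(* Let $\mathbf{V}$ be a finite set of random variables containing a target variable $T$, and let $\mathbf{F} = \mathbf{V} \setminus \{T\}$ be the set of features. Suppose the joint distribution $P$ of $\mathbf{V}$ can be faithfully represented by a directed maximal ancestral graph, and suppose the algorithm PFBP (described in the context) has access to a conditional independence oracle for $P$ and imposes no limit on the number of selected features. Then PFBP with no limit on the number of Runs returns the Markov blanket of $T$.
   Context: Notation: $\mathbf{X} \perp T \mid \mathbf{S}$ denotes conditional independence of $\mathbf{X}$ and $T$ given $\mathbf{S}$ under $P$. A Markov blanket of $T$ with respect to $\mathbf{V}$ is a minimal set $\mathbf{S} \subseteq \mathbf{F}$ such that $(\mathbf{V}\setminus(\mathbf{S}\cup\{T\})) \perp T \mid \mathbf{S}$; for faithful distributions it is unique. A directed maximal ancestral graph (DMAG) is a mixed graph with directed and bi-directed edges (the class of graphs closed under marginalization of Bayesian networks); it entails conditional independencies via m-separation. $P$ can be faithfully represented by a DMAG $G$ if the conditional independencies holding in $P$ are exactly those entailed by m-separation in $G$. The PFBP algorithm with an independence oracle (Parallel Forward-Backward with Pruning, with Early Dropping) operates as follows. Initially the selected set is $\mathbf{S} = \emptyset$. It performs Runs, up to a maximum number maxRuns of Runs, stopping early if a Run leaves $\mathbf{S}$ unchanged. Each Run consists of: (1) set the remaining set $\mathbf{R} = \mathbf{F} \setminus \mathbf{S}$; (2) forward phase: repeat iterations in which every $X \in \mathbf{R}$ with $X \perp T \mid \mathbf{S}$ is removed from $\mathbf{R}$ (Early Dropping), and then, if some $X \in \mathbf{R}$ is conditionally dependent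 on $T$ given $\mathbf{S}$, one such variable (the best-ranked one) is added to $\mathbf{S}$ and removed from $\mathbf{R}$; the forward phase ends when no variable is added; (3) backward phase: repeatedly, if some $X \in \mathbf{S}$ satisfies $X \perp T \mid \mathbf{S}\setminus\{X\}$, remove one such variable from $\mathbf{S}$; stop when no variable can be removed. The output is $\mathbf{S}$. "No limit on the number of Runs" means maxRuns $=\infty$, so Runs continue until $\mathbf{S}$ no longer changes. *)

theory Defs
  imports Main
begin

text \<open>A mixed graph over the vertex set V is given by a set D of directed edges
  ((a,b) \<in> D means a \<rightarrow> b) and a set B of bi-directed edges
  ((a,b) \<in> B means a \<leftrightarrow> b; B is symmetric).\<close>

definition adjacent :: "('v \<times> 'v) set \<Rightarrow> ('v \<times> 'v) set \<Rightarrow> 'v \<Rightarrow> 'v \<Rightarrow> bool" where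
  "adjacent D B a b \<longleftrightarrow> (a, b) \<in> D \<or> (b, a) \<in> D \<or> (a, b) \<in> B"

definition ancestor :: "('v \<times> 'v) set \<Rightarrow> 'v \<Rightarrow> 'v \<Rightarrow> bool" where
  "ancestor D a b \<longleftrightarrow> (a, b) \<in> D\<^sup>*"

definition arrow_into :: "('v \<times> 'v) set \<Rightarrow> ('v \<times> 'v) set \<Rightarrow> 'v \<Rightarrow> 'v \<Rightarrow> bool" where
  "arrow_into D B a b \<longleftrightarrow> (a, b) \<in> D \<or> (a, b) \<in> B"

text \<open>A path: a list of at least two distinct vertices of V, consecutive ones adjacent.
  (In a MAG there is at most one edge between two vertices, so the vertex list determines the path.)\<close>
definition is_path :: "'v set \<Rightarrow> ('v \<times> 'v) set \<Rightarrow> ('v \<times> 'v) set \<Rightarrow> 'v list \<Rightarrow> bool" where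
  "is_path V D B ps \<longleftrightarrow> length ps \<ge> 2 \<and> distinct ps \<and> set ps \<subseteq> V \<and>
     (\<forall>i. Suc i < length ps \<longrightarrow> adjacent D B (ps ! i) (ps ! Suc i))"

definition collider_at :: "('v \<times> 'v) set \<Rightarrow> ('v \<times> 'v) set \<Rightarrow> 'v list \<Rightarrow> nat \<Rightarrow> bool" where
  "collider_at D B ps i \<longleftrightarrow>
     arrow_into D B (ps ! (i - 1)) (ps ! i) \<and> arrow_into D B (ps ! Suc i) (ps ! i)"

definition m_connecting :: "('v \<times> 'v) set \<Rightarrow> ('v \<times> 'v) set \<Rightarrow> 'v set \<Rightarrow> 'v list \<Rightarrow> bool" where
  "m_connecting D B Z ps \<longleftrightarrow>
     (\<forall>i. 0 < i \<and> Suc i < length ps \<longrightarrow>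
        (collider_at D B ps i \<longrightarrow> (\<exists>z\<in>Z. ancestor D (ps ! i) z)) \<and>
        (\<not> collider_at D B ps i \<longrightarrow> ps ! i \<notin> Z))"

definition m_separated ::
  "'v set \<Rightarrow> ('v \<times> 'v) set \<Rightarrow> ('v \<times> 'v) set \<Rightarrow> 'v set \<Rightarrow> 'v set \<Rightarrow> 'v set \<Rightarrow> bool" where
  "m_separated V D B X Y Z \<longleftrightarrow>
     \<not> (\<exists>ps. is_path V D B ps \<and> hd ps \<in> X \<and> last ps \<in> Y \<and> m_connecting D B Z ps)"

definition is_dmag :: "'v set \<Rightarrow> ('v \<times> 'v) set \<Rightarrow> ('v \<times> 'v) set \<Rightarrow> bool" where
  "is_dmag V D B \<longleftrightarrow>
     D \<subseteq> V \<times> V \<and> B \<subseteq> V \<times> V \<and> sym B \<and> (\<forall>a. (a, a) \<notin> B) \<and>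
     acyclic D \<and>
     (\<forall>a b. (a, b) \<in> B \<longrightarrow> \<not> ancestor D a b) \<and>
     (\<forall>a\<in>V. \<forall>b\<in>V. a \<noteq> b \<and> \<not> adjacent D B a b \<longrightarrow>
        (\<exists>Z \<subseteq> V - {a, b}. m_separated V D B {a} {b} Z))"

text \<open>indep X Y Z means X \<perp> Y | Z under P. P is faithful to G iff for all pairwise
  disjoint X, Y, Z \<subseteq> V the independencies are exactly the m-separations.\<close>
definition faithful_to ::
  "('v set \<Rightarrow> 'v set \<Rightarrow> 'v set \<Rightarrow> bool) \<Rightarrow> 'v set \<Rightarrow> ('v \<times> 'v) set \<Rightarrow> ('v \<times> 'v) set \<Rightarrow> bool" where
  "faithful_to indep V D B \<longleftrightarrow>
     (\<forall>X Y Z. X \<subseteq> V \<and> Y \<subseteq> V \<and> Z \<subseteq> V \<and> X \<inter> Y = {} \<and> X \<inter> Z = {} \<and> Y \<inter> Z = {} \<longrightarrow>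
        (indep X Y Z \<longleftrightarrow> m_separated V D B X Y Z))"

definition blanket_cond :: "('v set \<Rightarrow> 'v set \<Rightarrow> 'v set \<Rightarrow> bool) \<Rightarrow> 'v set \<Rightarrow> 'v \<Rightarrow> 'v set \<Rightarrow> bool" where
  "blanket_cond indep V T S \<longleftrightarrow> S \<subseteq> V - {T} \<and> indep (V - (S \<union> {T})) {T} S"

definition is_markov_blanket :: "('v set \<Rightarrow> 'v set \<Rightarrow> 'v set \<Rightarrow> bool) \<Rightarrow> 'v set \<Rightarrow> 'v \<Rightarrow> 'v set \<Rightarrow> bool" where
  "is_markov_blanket indep V T S \<longleftrightarrow>
     blanket_cond indep V T S \<and> (\<forall>S'. S' \<subset> S \<longrightarrow> \<not> blanket_cond indep V T S')"

text \<open>Forward phase: pfbp_forward indep T S R S' means that the forward phase started with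
  selected set S and remaining set R can end with selected set S'.\<close>
inductive pfbp_forward :: "('v set \<Rightarrow> 'v set \<Rightarrow> 'v set \<Rightarrow> bool) \<Rightarrow> 'v \<Rightarrow> 'v set \<Rightarrow> 'v set \<Rightarrow> 'v set \<Rightarrow> bool"
  for indep :: "'v set \<Rightarrow> 'v set \<Rightarrow> 'v set \<Rightarrow> bool" and T :: 'v where
  fwd_stop: "R' = {X \<in> R. \<not> indep {X} {T} S} \<Longrightarrow> \<not> (\<exists>X\<in>R'. \<not> indep {X} {T} S)
     \<Longrightarrow> pfbp_forward indep T S R S"
| fwd_add: "R' = {X \<in> R. \<not> indep {X} {T} S} \<Longrightarrow> X \<in> R' \<Longrightarrow> \<not> indep {X} {T} S
     \<Longrightarrow> pfbp_forward indep T (insert X S) (R' - {X}) S''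
     \<Longrightarrow> pfbp_forward indep T S R S''"

inductive pfbp_backward :: "('v set \<Rightarrow> 'v set \<Rightarrow> 'v set \<Rightarrow> bool) \<Rightarrow> 'v \<Rightarrow> 'v set \<Rightarrow> 'v set \<Rightarrow> bool"
  for indep :: "'v set \<Rightarrow> 'v set \<Rightarrow> 'v set \<Rightarrow> bool" and T :: 'v where
  bwd_stop: "\<not> (\<exists>X\<in>S. indep {X} {T} (S - {X})) \<Longrightarrow> pfbp_backward indep T S S"
| bwd_remove: "X \<in> S \<Longrightarrow> indep {X} {T} (S - {X})
     \<Longrightarrow> pfbp_backward indep T (S - {X}) S'' \<Longrightarrow> pfbp_backward indep T S S''"

definition pfbp_run :: "('v set \<Rightarrow> 'v set \<Rightarrow> 'v set \<Rightarrow> bool) \<Rightarrow> 'v set \<Rightarrow> 'v \<Rightarrow> 'v set \<Rightarrow> 'v set \<Rightarrow> bool" where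
  "pfbp_run indep V T S S' \<longleftrightarrow>
     (\<exists>S1. pfbp_forward indep T S ((V - {T}) - S) S1 \<and> pfbp_backward indep T S1 S')"

end

theory Submission
  imports Defs
begin

text \<open>Call a path to T all of whose interior vertices are colliders a collider path. Under
  faithfulness the Markov blanket of T is the set of starting points of collider paths: a
  collider path whose interior is conditioned on makes its start dependent on T, and
  conversely an m-connecting path to T given a superset of that set must itself be a collider
  path. Stratifying by path length, a Run that starts with all starting points of collider
  paths of length at most m ends with all those of length at most m + 1: the forward phase
  adds them and the backward phase cannot remove them. After card V Runs the selected set
  contains the blanket, and a Run from such a set returns exactly the blanket.\<close>

definition collider_path :: "'v set \<Rightarrow> ('v \<times> 'v) set \<Rightarrow> ('v \<times> 'v) set \<Rightarrow> 'v \<Rightarrow> 'v list \<Rightarrow> bool" where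
  "collider_path V D B T ps \<longleftrightarrow> is_path V D B ps \<and> last ps = T \<and>
     (\<forall>i. 0 < i \<and> Suc i < length ps \<longrightarrow> collider_at D B ps i)"

definition collider_reach :: "'v set \<Rightarrow> ('v \<times> 'v) set \<Rightarrow> ('v \<times> 'v) set \<Rightarrow> 'v \<Rightarrow> nat \<Rightarrow> 'v set" where
  "collider_reach V D B T m = {Y. \<exists>ps. collider_path V D B T ps \<and> hd ps = Y \<and> length ps \<le> m}"

definition collider_connected :: "'v set \<Rightarrow> ('v \<times> 'v) set \<Rightarrow> ('v \<times> 'v) set \<Rightarrow> 'v \<Rightarrow> 'v set" where
  "collider_connected V D B T = {Y. \<exists>ps. collider_path V D B T ps \<and> hd ps = Y}"

lemma is_path_drop:
  assumes "is_path V D B ps" "j + 2 \<le> length ps"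
  shows "is_path V D B (drop j ps)"
proof -
  have "adjacent D B (drop j ps ! i) (drop j ps ! Suc i)" if "Suc i < length (drop j ps)" for i
  proof -
    have "adjacent D B (ps ! (j + i)) (ps ! Suc (j + i))"
      using assms(1) that unfolding is_path_def by simp
    then show ?thesis using assms(2) by simp
  qed
  then show ?thesis using assms unfolding is_path_def by (auto dest: in_set_dropD)
qed

lemma collider_path_drop:
  assumes "is_path V D B ps" "last ps = T" "Suc j < length ps"
    and "\<forall>i. j < i \<and> Suc i < length ps \<longrightarrow> collider_at D B ps i"
  shows "collider_path V D B T (drop j ps)" "hd (drop j ps) = ps ! j"
proof -
  have "collider_at D B (drop j ps) i" if i: "0 < i" "Suc i < length (drop j ps)" for i
  proof -
    have "collider_at D B ps (j + i)" using assms(4) i by auto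
    moreover have "drop j ps ! (i - 1) = ps ! (j + i - 1)" using i assms(3) by simp
    ultimately show ?thesis using assms(3) unfolding collider_at_def by simp
  qed
  then show "collider_path V D B T (drop j ps)"
    using is_path_drop[OF assms(1)] assms unfolding collider_path_def by simp
  show "hd (drop j ps) = ps ! j" using assms(3) by (simp add: hd_drop_conv_nth)
qed

lemma collider_path_length_le_card:
  "collider_path V D B T ps \<Longrightarrow> finite V \<Longrightarrow> length ps \<le> card V"
  unfolding collider_path_def is_path_def by (metis card_mono distinct_card)

lemma collider_path_hd:
  assumes "collider_path V D B T ps"
  shows "hd ps \<in> V - {T}"
proof -
  have p: "length ps \<ge> 2" "distinct ps" "set ps \<subseteq> V" "last ps = T"
    using assms unfolding collider_path_def is_path_def by auto
  then have ne: "ps \<noteq> []" by auto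
  have "ps ! 0 \<noteq> ps ! (length ps - 1)"
    using p(1) nth_eq_iff_index_eq[OF p(2), of 0 "length ps - 1"] by linarith
  then have "hd ps \<noteq> last ps" using ne by (simp add: hd_conv_nth last_conv_nth)
  then show ?thesis using p(3,4) ne by auto
qed

lemma collider_path_interior_neq_hd:
  assumes "collider_path V D B T ps" "0 < i" "Suc i < length ps"
  shows "ps ! i \<noteq> hd ps"
proof -
  have "distinct ps" "ps \<noteq> []" using assms unfolding collider_path_def is_path_def by auto
  then show ?thesis using assms nth_eq_iff_index_eq[of ps i 0] by (simp add: hd_conv_nth)
qed

lemma collider_path_not_m_separated:
  assumes "collider_path V D B T ps" "\<forall>i. 0 < i \<and> Suc i < length ps \<longrightarrow> ps ! i \<in> W"
  shows "\<not> m_separated V D B {hd ps} {T} W"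
proof -
  have "m_connecting D B W ps"
    using assms unfolding collider_path_def m_connecting_def ancestor_def by auto
  then show ?thesis using assms(1) unfolding m_separated_def collider_path_def by auto
qed

lemma collider_reach_0: "collider_reach V D B T 0 = {}"
  unfolding collider_reach_def collider_path_def is_path_def by auto

lemma collider_reach_mono: "m \<le> k \<Longrightarrow> collider_reach V D B T m \<subseteq> collider_reach V D B T k"
  unfolding collider_reach_def by auto

lemma collider_reach_subset_connected: "collider_reach V D B T m \<subseteq> collider_connected V D B T"
  unfolding collider_reach_def collider_connected_def by blast

lemma collider_connected_subset_reach:
  assumes "finite V" "card V \<le> k"
  shows "collider_connected V D B T \<subseteq> collider_reach V D B T k"
proof
  fix Y assume "Y \<in> collider_connected V D B T"
  then obtain ps where "collider_path V D B T ps" "hd ps = Y"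
    unfolding collider_connected_def by blast
  moreover have "length ps \<le> k"
    using collider_path_length_le_card[OF calculation(1) assms(1)] assms(2) by simp
  ultimately show "Y \<in> collider_reach V D B T k" unfolding collider_reach_def by blast
qed

lemma collider_connected_subset: "collider_connected V D B T \<subseteq> V - {T}"
  unfolding collider_connected_def by (auto dest: collider_path_hd)

lemma collider_reach_subset: "collider_reach V D B T m \<subseteq> V - {T}"
  using collider_reach_subset_connected collider_connected_subset by (rule order_trans)

lemma collider_reach_interior:
  assumes "collider_path V D B T ps" "0 < i" "Suc i < length ps" "length ps \<le> Suc m"
  shows "ps ! i \<in> collider_reach V D B T m"
proof -
  have cp: "is_path V D B ps" "last ps = T" "\<forall>i. 0 < i \<and> Suc i < length ps \<longrightarrow> collider_at D B ps i"
    using assms(1) unfolding collider_path_def by auto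
  have "\<forall>j. i < j \<and> Suc j < length ps \<longrightarrow> collider_at D B ps j" using cp(3) by simp
  then have "collider_path V D B T (drop i ps)" "hd (drop i ps) = ps ! i"
    using collider_path_drop[OF cp(1,2) assms(3)] by simp_all
  moreover have "length (drop i ps) \<le> m" using assms by simp
  ultimately show ?thesis unfolding collider_reach_def by blast
qed

text \<open>Y may itself lie in collider_reach m; excluding it from the required part of W is what
  lets the backward phase, which tests Y given S - {Y}, use this lemma.\<close>
lemma not_m_separated_collider_reach:
  assumes "Y \<in> collider_reach V D B T (Suc m)" "collider_reach V D B T m - {Y} \<subseteq> W"
  shows "\<not> m_separated V D B {Y} {T} W"
proof -
  obtain ps where ps: "collider_path V D B T ps" "hd ps = Y" "length ps \<le> Suc m"
    using assms(1) unfolding collider_reach_def by blast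
  have "ps ! i \<in> W" if "0 < i" "Suc i < length ps" for i
  proof -
    have "ps ! i \<in> collider_reach V D B T m"
      using collider_reach_interior[OF ps(1) that ps(3)] .
    moreover have "ps ! i \<noteq> Y" using collider_path_interior_neq_hd[OF ps(1) that] ps(2) by simp
    ultimately show ?thesis using assms(2) by blast
  qed
  then have "\<not> m_separated V D B {hd ps} {T} W"
    by (intro collider_path_not_m_separated[OF ps(1)]) simp
  then show ?thesis using ps(2) by simp
qed

text \<open>Backward induction along the path: each suffix is a collider path, so each interior
  vertex lies in W, and an m-connecting path can only pass through it as a collider.\<close>
lemma m_connecting_hd_collider_connected:
  assumes "is_path V D B ps" "last ps = T" "m_connecting D B W ps"
    and "collider_connected V D B T \<subseteq> W"
  shows "hd ps \<in> collider_connected V D B T"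
proof -
  let ?P = "\<lambda>j. \<forall>i. j < i \<and> Suc i < length ps \<longrightarrow> collider_at D B ps i"
  have L: "length ps \<ge> 2" using assms(1) unfolding is_path_def by auto
  have "?P 0"
  proof (rule inc_induct[of 0 "length ps - 2"])
    show "?P (length ps - 2)" by auto
  next
    fix n assume n: "n < length ps - 2" and IH: "?P (Suc n)"
    have "Suc (Suc n) < length ps" using n by simp
    then have "collider_path V D B T (drop (Suc n) ps)" "hd (drop (Suc n) ps) = ps ! Suc n"
      using collider_path_drop[OF assms(1,2) _ IH] by simp_all
    then have "ps ! Suc n \<in> W" using assms(4) unfolding collider_connected_def by blast
    moreover have "0 < Suc n" "Suc (Suc n) < length ps" using n by simp_all
    ultimately have "collider_at D B ps (Suc n)"
      using assms(3) unfolding m_connecting_def by blast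
    then show "?P n" using IH by (metis Suc_lessI)
  qed simp
  then have "collider_path V D B T ps"
    using collider_path_drop(1)[OF assms(1,2), of 0] L by simp
  then show ?thesis unfolding collider_connected_def by blast
qed

lemma m_separated_outside_collider_connected:
  assumes "collider_connected V D B T \<subseteq> W" "X \<inter> collider_connected V D B T = {}"
  shows "m_separated V D B X {T} W"
  unfolding m_separated_def
proof
  assume "\<exists>ps. is_path V D B ps \<and> hd ps \<in> X \<and> last ps \<in> {T} \<and> m_connecting D B W ps"
  then obtain ps where ps: "is_path V D B ps" "hd ps \<in> X" "last ps = T" "m_connecting D B W ps"
    by blast
  then have "hd ps \<in> collider_connected V D B T"
    using m_connecting_hd_collider_connected[OF _ _ _ assms(1)] by blast
  then show False using ps(2) assms(2) by blast
qed

lemma m_separated_subset_left: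
  "m_separated V D B X Y Z \<Longrightarrow> X' \<subseteq> X \<Longrightarrow> m_separated V D B X' Y Z"
  unfolding m_separated_def by auto

lemma faithful_indep_iff:
  assumes "faithful_to indep V D B" "T \<in> V" "X \<subseteq> V - {T}" "W \<subseteq> V - {T}" "X \<inter> W = {}"
  shows "indep X {T} W \<longleftrightarrow> m_separated V D B X {T} W"
  by (rule assms(1)[unfolded faithful_to_def, rule_format]) (use assms(2-5) in auto)

lemma faithful_dependent_collider_reach:
  assumes "faithful_to indep V D B" "T \<in> V"
    and "Y \<in> collider_reach V D B T (Suc m)" "collider_reach V D B T m - {Y} \<subseteq> W"
    and "W \<subseteq> V - {T}" "Y \<notin> W"
  shows "\<not> indep {Y} {T} W"
proof -
  have "{Y} \<subseteq> V - {T}" using collider_reach_subset[THEN subsetD, OF assms(3)] by simp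
  moreover have "{Y} \<inter> W = {}" using assms(6) by simp
  ultimately have "indep {Y} {T} W \<longleftrightarrow> m_separated V D B {Y} {T} W"
    by (rule faithful_indep_iff[OF assms(1,2) _ assms(5)])
  then show ?thesis using not_m_separated_collider_reach[OF assms(3,4)] by simp
qed

lemma blanket_cond_collider_connected_subset:
  assumes "faithful_to indep V D B" "T \<in> V" "finite V" "blanket_cond indep V T S"
  shows "collider_connected V D B T \<subseteq> S"
proof -
  have SF: "S \<subseteq> V - {T}" and ind: "indep (V - (S \<union> {T})) {T} S"
    using assms(4) unfolding blanket_cond_def by auto
  have "V - (S \<union> {T}) \<subseteq> V - {T}" "(V - (S \<union> {T})) \<inter> S = {}" by auto
  then have sep: "m_separated V D B (V - (S \<union> {T})) {T} S"
    using ind faithful_indep_iff[OF assms(1,2) _ SF] by simp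
  have "collider_reach V D B T m \<subseteq> S" for m
  proof (induction m)
    case 0
    then show ?case by (simp add: collider_reach_0)
  next
    case (Suc m)
    show ?case
    proof
      fix Y assume Y: "Y \<in> collider_reach V D B T (Suc m)"
      show "Y \<in> S"
      proof (rule ccontr)
        assume "Y \<notin> S"
        moreover have "Y \<in> V - {T}" using Y by (rule collider_reach_subset[THEN subsetD])
        ultimately have "{Y} \<subseteq> V - (S \<union> {T})" by blast
        then have "m_separated V D B {Y} {T} S" by (rule m_separated_subset_left[OF sep])
        moreover have "collider_reach V D B T m - {Y} \<subseteq> S" using Suc.IH by blast
        ultimately show False using not_m_separated_collider_reach[OF Y] by simp
      qed
    qed
  qed
  then show ?thesis using collider_connected_subset_reach[OF assms(3) order_refl] by blast
qed

lemma markov_blanket_collider_connected: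
  assumes "faithful_to indep V D B" "T \<in> V" "finite V"
  shows "is_markov_blanket indep V T (collider_connected V D B T)"
proof -
  let ?C = "collider_connected V D B T"
  have CF: "?C \<subseteq> V - {T}" by (rule collider_connected_subset)
  have "m_separated V D B (V - (?C \<union> {T})) {T} ?C"
    by (rule m_separated_outside_collider_connected) auto
  moreover have "V - (?C \<union> {T}) \<subseteq> V - {T}" "(V - (?C \<union> {T})) \<inter> ?C = {}" by auto
  ultimately have "indep (V - (?C \<union> {T})) {T} ?C"
    using faithful_indep_iff[OF assms(1,2) _ CF] by simp
  then have "blanket_cond indep V T ?C" using CF unfolding blanket_cond_def by simp
  then show ?thesis
    using blanket_cond_collider_connected_subset[OF assms] unfolding is_markov_blanket_def by blast
qed

lemma pfbp_forward_mono: "pfbp_forward indep T S R S'' \<Longrightarrow> S \<subseteq> S''"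
  by (induction rule: pfbp_forward.induct) auto

lemma pfbp_forward_subset:
  "pfbp_forward indep T S R S'' \<Longrightarrow> S \<subseteq> F \<Longrightarrow> R \<subseteq> F \<Longrightarrow> S'' \<subseteq> F"
  by (induction rule: pfbp_forward.induct) auto

lemma pfbp_forward_selects_dependent:
  "pfbp_forward indep T S R S'' \<Longrightarrow> S \<subseteq> F \<Longrightarrow> R \<subseteq> F \<Longrightarrow> Y \<in> R \<Longrightarrow>
    (\<forall>W. S \<subseteq> W \<longrightarrow> W \<subseteq> F \<longrightarrow> Y \<notin> W \<longrightarrow> \<not> indep {Y} {T} W) \<Longrightarrow> Y \<in> S''"
proof (induction rule: pfbp_forward.induct)
  case (fwd_stop R' R S)
  then show ?case by blast
next
  case (fwd_add R' R S X S'')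
  show ?case
  proof (cases "Y \<in> insert X S")
    case True
    then show ?thesis using pfbp_forward_mono[OF fwd_add(4)] by blast
  next
    case False
    then have "Y \<in> R' - {X}" using fwd_add.hyps(1) fwd_add.prems by simp
    moreover have "insert X S \<subseteq> F" "R' - {X} \<subseteq> F" using fwd_add.hyps(1,2) fwd_add.prems by auto
    ultimately show ?thesis using fwd_add.IH fwd_add.prems(4) by blast
  qed
qed

lemma pfbp_backward_subset: "pfbp_backward indep T S S'' \<Longrightarrow> S'' \<subseteq> S"
  by (induction rule: pfbp_backward.induct) auto

lemma pfbp_backward_final:
  "pfbp_backward indep T S S'' \<Longrightarrow> X \<in> S'' \<Longrightarrow> \<not> indep {X} {T} (S'' - {X})"
  by (induction rule: pfbp_backward.induct) auto

lemma pfbp_backward_keeps_dependent: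
  "pfbp_backward indep T S S'' \<Longrightarrow> S \<subseteq> F \<Longrightarrow> Q \<subseteq> S \<Longrightarrow>
    (\<forall>Z\<in>Q. \<forall>W. Q - {Z} \<subseteq> W \<longrightarrow> W \<subseteq> F \<longrightarrow> Z \<notin> W \<longrightarrow> \<not> indep {Z} {T} W) \<Longrightarrow> Q \<subseteq> S''"
proof (induction rule: pfbp_backward.induct)
  case (bwd_stop S)
  then show ?case by blast
next
  case (bwd_remove X S S2)
  have "X \<notin> Q"
  proof
    assume "X \<in> Q"
    moreover have "Q - {X} \<subseteq> S - {X}" "S - {X} \<subseteq> F" using bwd_remove.prems(1,2) by auto
    ultimately have "\<not> indep {X} {T} (S - {X})" using bwd_remove.prems(3) by blast
    then show False using bwd_remove.hyps(2) by contradiction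
  qed
  then show ?case using bwd_remove.IH bwd_remove.prems by blast
qed

lemma pfbp_run_subset:
  "pfbp_run indep V T S S' \<Longrightarrow> S \<subseteq> V - {T} \<Longrightarrow> S' \<subseteq> V - {T}"
  unfolding pfbp_run_def
  by (meson Diff_subset order_trans pfbp_backward_subset pfbp_forward_subset)

lemma pfbp_run_collider_reach_Suc:
  assumes fa: "faithful_to indep V D B" and TV: "T \<in> V"
    and run: "pfbp_run indep V T S S'" and SF: "S \<subseteq> V - {T}"
    and reach: "collider_reach V D B T m \<subseteq> S"
  shows "collider_reach V D B T (Suc m) \<subseteq> S'"
proof -
  let ?C = "collider_reach V D B T"
  obtain S1 where fwd: "pfbp_forward indep T S ((V - {T}) - S) S1"
    and bwd: "pfbp_backward indep T S1 S'"
    using run unfolding pfbp_run_def by blast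
  have dep: "\<not> indep {Y} {T} W"
    if "Y \<in> ?C (Suc m)" "?C m - {Y} \<subseteq> W" "W \<subseteq> V - {T}" "Y \<notin> W" for Y W
    using faithful_dependent_collider_reach[OF fa TV that] .
  have C1: "?C (Suc m) \<subseteq> S1"
  proof
    fix Y assume Y: "Y \<in> ?C (Suc m)"
    show "Y \<in> S1"
    proof (cases "Y \<in> S")
      case True
      then show ?thesis using pfbp_forward_mono[OF fwd] by blast
    next
      case False
      have "Y \<in> V - {T}" using Y by (rule collider_reach_subset[THEN subsetD])
      then have "Y \<in> (V - {T}) - S" using False by blast
      moreover have "\<forall>W. S \<subseteq> W \<longrightarrow> W \<subseteq> V - {T} \<longrightarrow> Y \<notin> W \<longrightarrow> \<not> indep {Y} {T} W"
      proof (intro allI impI)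
        fix W assume W: "S \<subseteq> W" "W \<subseteq> V - {T}" "Y \<notin> W"
        have "?C m - {Y} \<subseteq> W" using reach W(1) by auto
        then show "\<not> indep {Y} {T} W" using Y W(2,3) by (intro dep)
      qed
      ultimately show ?thesis using pfbp_forward_selects_dependent[OF fwd SF] by blast
    qed
  qed
  have "\<forall>Z\<in>?C (Suc m). \<forall>W. ?C (Suc m) - {Z} \<subseteq> W \<longrightarrow> W \<subseteq> V - {T} \<longrightarrow> Z \<notin> W \<longrightarrow>
      \<not> indep {Z} {T} W"
  proof (intro ballI allI impI)
    fix Z W assume Z: "Z \<in> ?C (Suc m)" and W: "?C (Suc m) - {Z} \<subseteq> W" "W \<subseteq> V - {T}" "Z \<notin> W"
    have "?C m \<subseteq> ?C (Suc m)" by (rule collider_reach_mono) simp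
    then have "?C m - {Z} \<subseteq> W" using W(1) by auto
    then show "\<not> indep {Z} {T} W" using Z W(2,3) by (intro dep)
  qed
  then show ?thesis
    using pfbp_backward_keeps_dependent[OF bwd pfbp_forward_subset[OF fwd SF] C1] by simp
qed

lemma pfbp_run_from_superset_collider_connected:
  assumes fa: "faithful_to indep V D B" and TV: "T \<in> V" and fin: "finite V"
    and run: "pfbp_run indep V T S S'" and SF: "S \<subseteq> V - {T}"
    and CS: "collider_connected V D B T \<subseteq> S"
  shows "S' = collider_connected V D B T"
proof
  let ?C = "collider_connected V D B T"
  obtain S1 where bwd: "pfbp_backward indep T S1 S'"
    using run unfolding pfbp_run_def by blast
  have S'F: "S' \<subseteq> V - {T}" using pfbp_run_subset[OF run SF] .
  have "collider_reach V D B T (Suc (card V)) \<subseteq> S'"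
    using pfbp_run_collider_reach_Suc[OF fa TV run SF]
      order_trans[OF collider_reach_subset_connected CS] by blast
  moreover have "?C \<subseteq> collider_reach V D B T (Suc (card V))"
    by (rule collider_connected_subset_reach[OF fin]) simp
  ultimately show C1: "?C \<subseteq> S'" by (rule order_trans[rotated])
  show "S' \<subseteq> ?C"
  proof
    fix X assume X: "X \<in> S'"
    show "X \<in> ?C"
    proof (rule ccontr)
      assume "X \<notin> ?C"
      then have "m_separated V D B {X} {T} (S' - {X})"
        using C1 by (intro m_separated_outside_collider_connected) auto
      then have "indep {X} {T} (S' - {X})"
        using faithful_indep_iff[OF fa TV, of "{X}" "S' - {X}"] X S'F by auto
      then show False using pfbp_backward_final[OF bwd X] by simp
    qed
  qed
qed

lemma pfbp_runs_collider_reach: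
  assumes fa: "faithful_to indep V D B" and TV: "T \<in> V"
    and runs: "\<And>n. pfbp_run indep V T (Ss n) (Ss (Suc n))" and SF: "\<And>n. Ss n \<subseteq> V - {T}"
  shows "collider_reach V D B T n \<subseteq> Ss n"
proof (induction n)
  case (Suc n)
  then show ?case by (rule pfbp_run_collider_reach_Suc[OF fa TV runs SF])
qed (simp add: collider_reach_0)

lemma pfbp_run_fixpoint:
  assumes fa: "faithful_to indep V D B" and TV: "T \<in> V" and fin: "finite V"
    and run: "pfbp_run indep V T S S" and SF: "S \<subseteq> V - {T}"
  shows "S = collider_connected V D B T"
proof -
  have "collider_reach V D B T m \<subseteq> S" for m
    using pfbp_runs_collider_reach[where Ss = "\<lambda>_. S", OF fa TV run SF] .
  then have "collider_connected V D B T \<subseteq> S"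
    using collider_connected_subset_reach[OF fin order_refl] by blast
  then show ?thesis using pfbp_run_from_superset_collider_connected[OF fa TV fin run SF] by simp
qed

theorem theorem2:
  fixes V :: "'v set" and T :: 'v
    and D B :: "('v \<times> 'v) set"
    and indep :: "'v set \<Rightarrow> 'v set \<Rightarrow> 'v set \<Rightarrow> bool"
    and Ss :: "nat \<Rightarrow> 'v set"
  assumes "finite V" and "T \<in> V"
    and "is_dmag V D B"
    and "faithful_to indep V D B"
    and "Ss 0 = {}"
    and "\<forall>i. pfbp_run indep V T (Ss i) (Ss (Suc i))"
  shows "(\<exists>n. Ss (Suc n) = Ss n) \<and>
         (\<forall>n. Ss (Suc n) = Ss n \<longrightarrow> is_markov_blanket indep V T (Ss n))"
proof -
  note fin = assms(1) and TV = assms(2) and fa = assms(4) and runs = assms(6)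
  let ?C = "collider_connected V D B T" and ?N = "card V"
  have run: "pfbp_run indep V T (Ss n) (Ss (Suc n))" for n using runs by blast
  have SF: "Ss n \<subseteq> V - {T}" for n
  proof (induction n)
    case (Suc n)
    then show ?case by (rule pfbp_run_subset[OF run])
  qed (simp add: assms(5))
  have "collider_reach V D B T ?N \<subseteq> Ss ?N" by (rule pfbp_runs_collider_reach[where Ss = Ss, OF fa TV run SF])
  then have "?C \<subseteq> Ss ?N" using collider_connected_subset_reach[OF fin order_refl] by blast
  then have C1: "Ss (Suc ?N) = ?C"
    by (rule pfbp_run_from_superset_collider_connected[OF fa TV fin run SF])
  then have "Ss (Suc (Suc ?N)) = ?C"
    by (intro pfbp_run_from_superset_collider_connected[OF fa TV fin run SF]) simp
  then have "\<exists>n. Ss (Suc n) = Ss n" using C1 by metis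
  moreover have "Ss n = ?C" if "Ss (Suc n) = Ss n" for n
    using pfbp_run_fixpoint[OF fa TV fin _ SF] run[of n] that by simp
  ultimately show ?thesis using markov_blanket_collider_connected[OF fa TV fin] by auto
qed

end
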